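(* Let $N$ be a positive integer, $L>0$, and $\zeta=(\zeta_0,\dots,\zeta_{N+2})\in\mathbb{R}^{N+3}$ with $\zeta_0>\zeta_1>\dots>\zeta_{N+1}>\zeta_{N+2}=0$. With $W^\zeta$ as defined in the context, for any $y\in\mathbb{R}^{N+1}$ the minimization problem defining $W^\zeta(y)$ has an optimal solution $(\nu^*,\alpha^* )$ with $\alpha^*\in\Delta_{N+2}$ of the form \[ \alpha^*=(\underbrace{0,\dots,0}_{m},\alpha^*_m,1-\alpha^*_m,\underbrace{0,\dots,0}_{N-m}) \] for some $m\in\{0,\dots,N\}$.
   Context: Let $e_0,\dots,e_N$ denote the standard unit vectors of $\mathbb{R}^{N+1}$ (zero-based indexing). Define for $i=0,\dots,N+1$: $x_i=-\sum_{j=0}^{i-1}\frac{\zeta_j-\zeta_{i+1}}{\sqrt{\zeta_j-\zeta_{j+1}}}e_j\in\mathbb{R}^{N+1}$; $g_i=L\sqrt{\zeta_i-\zeta_{i+1}}\,e_i$ for $i=0,\dots,N$ and $g_{N+1}=0$; $f_i=\frac L2(\zeta_i+\zeta_{i+1})$ for $i=0,\dots,N$ and $f_{N+1}=0$. For $y\in\mathbb{R}^{N+1}$, $\nu\in\mathbb{R}^{N+1}$, $\alpha=(\alpha_0,\dots,\alpha_{N+1})\in\mathbb{R}^{N+2}$ let $w^\zeta(y,\nu,\alpha)=\frac L2\|y+\nu-\sum_{i=0}^{N+1}\alpha_i(x_i-\frac1Lg_i)\|^2+\sum_{i=0}^{N+1}\alpha_i(f_i-\frac1{2L}\|g_i\|^2)$,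 and $W^\zeta(y)=\min\{w^\zeta(y,\nu,\alpha):\nu\in\mathbb{R}^{N+1}_+,\ \alpha\in\Delta_{N+2}\}$, where $\mathbb{R}^{N+1}_+$ is the nonnegative orthant and $\Delta_{N+2}=\{\alpha\in\mathbb{R}^{N+2}:\alpha_i\geq0,\ \sum_i\alpha_i=1\}$ (entries indexed $0,\dots,N+1$). *)

theory Defs
  imports Complex_Main
begin

text \<open>Vectors in R^(N+1) are represented as functions nat => real, of which only the
components 0..N are used; alpha in R^(N+2) uses components 0..N+1.\<close>

definition xv :: "(nat \<Rightarrow> real) \<Rightarrow> nat \<Rightarrow> nat \<Rightarrow> real" where
  "xv \<zeta> i j = (if j < i then - ((\<zeta> j - \<zeta> (i+1)) / sqrt (\<zeta> j - \<zeta> (j+1))) else 0)"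

definition gv :: "nat \<Rightarrow> real \<Rightarrow> (nat \<Rightarrow> real) \<Rightarrow> nat \<Rightarrow> nat \<Rightarrow> real" where
  "gv N L \<zeta> i j = (if i \<le> N \<and> j = i then L * sqrt (\<zeta> i - \<zeta> (i+1)) else 0)"

definition fv :: "nat \<Rightarrow> real \<Rightarrow> (nat \<Rightarrow> real) \<Rightarrow> nat \<Rightarrow> real" where
  "fv N L \<zeta> i = (if i \<le> N then L / 2 * (\<zeta> i + \<zeta> (i+1)) else 0)"

definition wz :: "nat \<Rightarrow> real \<Rightarrow> (nat \<Rightarrow> real) \<Rightarrow> (nat \<Rightarrow> real) \<Rightarrow> (nat \<Rightarrow> real)
                   \<Rightarrow> (nat \<Rightarrow> real) \<Rightarrow> real" where
  "wz N L \<zeta> y \<nu> \<alpha> =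
     L / 2 * (\<Sum>j\<le>N. (y j + \<nu> j - (\<Sum>i\<le>N+1. \<alpha> i * (xv \<zeta> i j - gv N L \<zeta> i j / L)))\<^sup>2)
     + (\<Sum>i\<le>N+1. \<alpha> i * (fv N L \<zeta> i - (\<Sum>j\<le>N. (gv N L \<zeta> i j)\<^sup>2) / (2 * L)))"

definition feasible :: "nat \<Rightarrow> (nat \<Rightarrow> real) \<Rightarrow> (nat \<Rightarrow> real) \<Rightarrow> bool" where
  "feasible N \<nu> \<alpha> \<longleftrightarrow> (\<forall>j\<le>N. \<nu> j \<ge> 0) \<and> (\<forall>i\<le>N+1. \<alpha> i \<ge> 0) \<and> (\<Sum>i\<le>N+1. \<alpha> i) = 1"

end

theory Submission
  imports Defs
begin

text \<open>With \<open>s\<^sub>j = \<surd>(\<zeta>\<^sub>j - \<zeta>\<^sub>j\<^sub>+\<^sub>1)\<close>, the objective is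
  \<open>w = L/2 \<Sum>\<^sub>j (y\<^sub>j + \<nu>\<^sub>j + \<Sum>\<^sub>i \<alpha>\<^sub>i (\<zeta>\<^sub>j - \<zeta>\<^sub>i\<^sub>+\<^sub>1)\<^sup>+ / s\<^sub>j)\<^sup>2 + L q\<close> with \<open>q = \<Sum>\<^sub>i \<alpha>\<^sub>i \<zeta>\<^sub>i\<^sub>+\<^sub>1\<close>.
  By convexity of \<open>x \<mapsto> (\<zeta>\<^sub>j - x)\<^sup>+\<close> the inner sum is at least \<open>(\<zeta>\<^sub>j - q)\<^sup>+\<close>, and taking \<open>\<nu>\<close>
  optimally shows \<open>w \<ge> H q\<close> for the continuous reduced objective \<open>H\<close> of the single variable
  \<open>q \<in> [0, \<zeta>\<^sub>1]\<close>. Conversely, if \<open>\<zeta>\<^sub>m\<^sub>+\<^sub>2 \<le> q \<le> \<zeta>\<^sub>m\<^sub>+\<^sub>1\<close>, the weights supported on \<open>{m, m+1}\<close>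
  that produce \<open>q\<close> make the convexity inequality an equality, so they attain \<open>H q\<close>.
  Choosing \<open>q\<close> to minimise \<open>H\<close> gives an optimal solution of the required form.\<close>

lemma pos_part_convex_combination_le:
  fixes a :: real and b w :: "'i \<Rightarrow> real"
  assumes "\<And>i. i \<in> I \<Longrightarrow> w i \<ge> 0" and "sum w I = 1"
  shows "max 0 (a - (\<Sum>i\<in>I. w i * b i)) \<le> (\<Sum>i\<in>I. w i * max 0 (a - b i))"
proof -
  have "(\<Sum>i\<in>I. w i * (a - b i)) = a - (\<Sum>i\<in>I. w i * b i)"
    using assms(2) by (simp add: right_diff_distrib sum_subtractf sum_distrib_right[symmetric])
  moreover have "(\<Sum>i\<in>I. w i * (a - b i)) \<le> (\<Sum>i\<in>I. w i * max 0 (a - b i))"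
    by (intro sum_mono mult_left_mono) (use assms(1) in auto)
  moreover have "0 \<le> (\<Sum>i\<in>I. w i * max 0 (a - b i))"
    by (intro sum_nonneg) (use assms(1) in auto)
  ultimately show ?thesis by simp
qed

lemma obtain_convex_weight:
  fixes a b q :: real
  assumes "b < a" and "b \<le> q" and "q \<le> a"
  obtains t where "0 \<le> t" and "t \<le> 1" and "q = t * a + (1 - t) * b"
proof -
  define t where "t = (q - b) / (a - b)"
  have "t * (a - b) = q - b" using assms(1) by (simp add: t_def)
  then have "q = t * a + (1 - t) * b" by (simp add: algebra_simps)
  moreover have "0 \<le> t" and "t \<le> 1" using assms by (simp_all add: t_def field_simps)
  ultimately show ?thesis using that by blast
qed

lemma exists_bracketing_index:
  fixes f :: "nat \<Rightarrow> 'a :: linorder"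
  assumes "f (Suc n) \<le> q" and "q \<le> f 0"
  shows "\<exists>m\<le>n. f (Suc m) \<le> q \<and> q \<le> f m"
proof -
  define m where "m = (LEAST k. f (Suc k) \<le> q)"
  have "f (Suc m) \<le> q" unfolding m_def by (rule LeastI[of _ n]) (use assms in simp)
  moreover have "m \<le> n" unfolding m_def by (rule Least_le) (use assms in simp)
  moreover have "q \<le> f m"
  proof (cases m)
    case (Suc k)
    then have "\<not> f (Suc k) \<le> q" using not_less_Least[of k "\<lambda>k. f (Suc k) \<le> q"] m_def by simp
    with Suc show ?thesis by simp
  qed (use assms in simp)
  ultimately show ?thesis by blast
qed

lemma pos_part_sq_le: "(r::real) \<le> x \<Longrightarrow> (max 0 r)\<^sup>2 \<le> x\<^sup>2"
  by (cases "r \<le> 0") (auto intro: power_mono)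

definition two_point_weights :: "nat \<Rightarrow> real \<Rightarrow> nat \<Rightarrow> real" where
  "two_point_weights m t i = (if i = m then t else if i = m+1 then 1 - t else 0)"

lemma sum_two_point_weights:
  fixes f :: "nat \<Rightarrow> real"
  assumes "m < n"
  shows "(\<Sum>i\<le>n. two_point_weights m t i * f i) = t * f m + (1 - t) * f (m+1)"
proof -
  have "(\<Sum>i\<le>n. two_point_weights m t i * f i)
     = (\<Sum>i\<le>n. (if i = m then t * f m else 0) + (if i = m+1 then (1-t) * f (m+1) else 0))"
    by (rule sum.cong) (auto simp: two_point_weights_def)
  also have "\<dots> = t * f m + (1 - t) * f (m+1)"
    using assms by (simp add: sum.distrib)
  finally show ?thesis .
qed

locale decreasing_grid =
  fixes N :: nat and L :: real and \<zeta> :: "nat \<Rightarrow> real"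
  assumes L_pos: "L > 0"
    and zeta_step_less: "\<And>i. i \<le> N + 1 \<Longrightarrow> \<zeta> (i+1) < \<zeta> i"
    and zeta_last: "\<zeta> (N+2) = 0"
begin

lemma zeta_less: "a < b \<Longrightarrow> b \<le> N+2 \<Longrightarrow> \<zeta> b < \<zeta> a"
proof (induction b)
  case (Suc b)
  have "\<zeta> (Suc b) < \<zeta> b" using zeta_step_less[of b] Suc.prems by simp
  with Suc show ?case by (cases "a = b") simp_all
qed simp

lemma zeta_le: "a \<le> b \<Longrightarrow> b \<le> N+2 \<Longrightarrow> \<zeta> b \<le> \<zeta> a"
  using zeta_less[of a b] by (cases "a = b") simp_all

lemma zeta_nonneg: "k \<le> N+2 \<Longrightarrow> 0 \<le> \<zeta> k"
  using zeta_le[of k "N+2"] zeta_last by simp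

lemma sqrt_zeta_step_pos: "j \<le> N \<Longrightarrow> 0 < sqrt (\<zeta> j - \<zeta> (j+1))"
  using zeta_step_less[of j] by simp

lemma xv_minus_gv_eq:
  assumes i: "i \<le> N+1" and j: "j \<le> N"
  shows "xv \<zeta> i j - gv N L \<zeta> i j / L = - (max 0 (\<zeta> j - \<zeta> (i+1)) / sqrt (\<zeta> j - \<zeta> (j+1)))"
proof -
  consider "j < i" | "j = i" | "i < j" by linarith
  then show ?thesis
  proof cases
    case 1
    then have "\<zeta> (i+1) < \<zeta> j" using zeta_less[of j "i+1"] i by simp
    with 1 show ?thesis by (simp add: xv_def gv_def)
  next
    case 2
    have step_pos: "\<zeta> j - \<zeta> (j+1) > 0" using zeta_step_less[of j] j by simp
    then have "L * sqrt (\<zeta> j - \<zeta> (j+1)) / L = (\<zeta> j - \<zeta> (j+1)) / sqrt (\<zeta> j - \<zeta> (j+1))"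
      using L_pos by (simp add: real_div_sqrt)
    with 2 j step_pos show ?thesis by (simp add: xv_def gv_def)
  next
    case 3
    then have "\<zeta> j \<le> \<zeta> (i+1)" using zeta_le[of "i+1" j] j by simp
    with 3 show ?thesis by (simp add: xv_def gv_def)
  qed
qed

lemma fv_minus_gv_sq_eq:
  assumes i: "i \<le> N+1"
  shows "fv N L \<zeta> i - (\<Sum>j\<le>N. (gv N L \<zeta> i j)\<^sup>2) / (2 * L) = L * \<zeta> (i+1)"
proof (cases "i \<le> N")
  case True
  have "\<zeta> i - \<zeta> (i+1) > 0" using zeta_step_less[of i] i by simp
  then have "(\<Sum>j\<le>N. (gv N L \<zeta> i j)\<^sup>2) = (\<Sum>j\<le>N. if j = i then L^2 * (\<zeta> i - \<zeta> (i+1)) else 0)"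
    by (intro sum.cong) (auto simp: gv_def power_mult_distrib)
  also have "\<dots> = L^2 * (\<zeta> i - \<zeta> (i+1))" using True by simp
  finally show ?thesis using True L_pos by (simp add: fv_def field_simps power2_eq_square)
next
  case False
  with i have "i = N+1" by simp
  with zeta_last show ?thesis by (simp add: fv_def gv_def)
qed

lemma wz_closed_form:
  "wz N L \<zeta> y \<nu> \<alpha> = L / 2 * (\<Sum>j\<le>N. (y j + \<nu> j
      + (\<Sum>i\<le>N+1. \<alpha> i * max 0 (\<zeta> j - \<zeta> (i+1))) / sqrt (\<zeta> j - \<zeta> (j+1)))\<^sup>2)
      + L * (\<Sum>i\<le>N+1. \<alpha> i * \<zeta> (i+1))"
proof -
  have inner_sum: "(\<Sum>i\<le>N+1. \<alpha> i * (xv \<zeta> i j - gv N L \<zeta> i j / L))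
      = - ((\<Sum>i\<le>N+1. \<alpha> i * max 0 (\<zeta> j - \<zeta> (i+1))) / sqrt (\<zeta> j - \<zeta> (j+1)))"
    if j: "j \<le> N" for j
  proof -
    have "(\<Sum>i\<le>N+1. \<alpha> i * (xv \<zeta> i j - gv N L \<zeta> i j / L))
       = (\<Sum>i\<le>N+1. - (\<alpha> i * max 0 (\<zeta> j - \<zeta> (i+1)) / sqrt (\<zeta> j - \<zeta> (j+1))))"
      by (intro sum.cong) (auto simp: xv_minus_gv_eq[OF _ j])
    also have "\<dots> = - ((\<Sum>i\<le>N+1. \<alpha> i * max 0 (\<zeta> j - \<zeta> (i+1))) / sqrt (\<zeta> j - \<zeta> (j+1)))"
      by (simp only: sum_negf sum_divide_distrib)
    finally show ?thesis .
  qed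
  have linear_part: "(\<Sum>i\<le>N+1. \<alpha> i * (fv N L \<zeta> i - (\<Sum>j\<le>N. (gv N L \<zeta> i j)\<^sup>2) / (2 * L)))
      = L * (\<Sum>i\<le>N+1. \<alpha> i * \<zeta> (i+1))"
  proof -
    have "(\<Sum>i\<le>N+1. \<alpha> i * (fv N L \<zeta> i - (\<Sum>j\<le>N. (gv N L \<zeta> i j)\<^sup>2) / (2 * L)))
        = (\<Sum>i\<le>N+1. L * (\<alpha> i * \<zeta> (i+1)))"
      by (intro sum.cong) (simp_all add: fv_minus_gv_sq_eq)
    then show ?thesis by (simp only: sum_distrib_left)
  qed
  show ?thesis
    unfolding wz_def linear_part by (intro arg_cong2[where f = "(+)"] refl arg_cong2[where f = "(*)"]
        sum.cong) (simp_all only: atMost_iff inner_sum diff_minus_eq_add minus_minus)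
qed

lemma feasible_weighted_zeta_bounds:
  assumes "feasible N \<nu> \<alpha>"
  shows "(\<Sum>i\<le>N+1. \<alpha> i * \<zeta> (i+1)) \<in> {0..\<zeta> 1}"
proof -
  have \<alpha>_nonneg: "\<And>i. i \<le> N+1 \<Longrightarrow> \<alpha> i \<ge> 0" and \<alpha>_sum: "(\<Sum>i\<le>N+1. \<alpha> i) = 1"
    using assms by (auto simp: feasible_def)
  have "0 \<le> (\<Sum>i\<le>N+1. \<alpha> i * \<zeta> (i+1))"
    by (intro sum_nonneg) (simp add: \<alpha>_nonneg zeta_nonneg)
  moreover have "(\<Sum>i\<le>N+1. \<alpha> i * \<zeta> (i+1)) \<le> (\<Sum>i\<le>N+1. \<alpha> i * \<zeta> 1)"
    by (intro sum_mono mult_left_mono) (simp_all add: \<alpha>_nonneg zeta_le)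
  ultimately show ?thesis using \<alpha>_sum by (simp add: sum_distrib_right[symmetric])
qed

definition reduced_objective :: "(nat \<Rightarrow> real) \<Rightarrow> real \<Rightarrow> real" where
  "reduced_objective y q =
     L / 2 * (\<Sum>j\<le>N. (max 0 (y j + max 0 (\<zeta> j - q) / sqrt (\<zeta> j - \<zeta> (j+1))))\<^sup>2) + L * q"

lemma continuous_on_reduced_objective: "continuous_on S (reduced_objective y)"
  unfolding reduced_objective_def
  by (intro continuous_intros) (auto dest: sqrt_zeta_step_pos)

lemma reduced_objective_le_wz:
  assumes f: "feasible N \<nu> \<alpha>"
  shows "reduced_objective y (\<Sum>i\<le>N+1. \<alpha> i * \<zeta> (i+1)) \<le> wz N L \<zeta> y \<nu> \<alpha>"
proof -
  define q where "q = (\<Sum>i\<le>N+1. \<alpha> i * \<zeta> (i+1))"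
  have summand_le: "(max 0 (y j + max 0 (\<zeta> j - q) / sqrt (\<zeta> j - \<zeta> (j+1))))\<^sup>2
      \<le> (y j + \<nu> j + (\<Sum>i\<le>N+1. \<alpha> i * max 0 (\<zeta> j - \<zeta> (i+1))) / sqrt (\<zeta> j - \<zeta> (j+1)))\<^sup>2"
    if j: "j \<le> N" for j
  proof -
    have "max 0 (\<zeta> j - q) \<le> (\<Sum>i\<le>N+1. \<alpha> i * max 0 (\<zeta> j - \<zeta> (i+1)))"
      unfolding q_def using f by (intro pos_part_convex_combination_le) (auto simp: feasible_def)
    then have "max 0 (\<zeta> j - q) / sqrt (\<zeta> j - \<zeta> (j+1))
        \<le> (\<Sum>i\<le>N+1. \<alpha> i * max 0 (\<zeta> j - \<zeta> (i+1))) / sqrt (\<zeta> j - \<zeta> (j+1))"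
      using sqrt_zeta_step_pos[OF j] by (simp add: divide_right_mono)
    moreover have "\<nu> j \<ge> 0" using f j by (simp add: feasible_def)
    ultimately show ?thesis
      by (intro pos_part_sq_le) linarith
  qed
  have "reduced_objective y q
      \<le> L / 2 * (\<Sum>j\<le>N. (y j + \<nu> j
        + (\<Sum>i\<le>N+1. \<alpha> i * max 0 (\<zeta> j - \<zeta> (i+1))) / sqrt (\<zeta> j - \<zeta> (j+1)))\<^sup>2) + L * q"
    unfolding reduced_objective_def using L_pos summand_le
    by (intro add_right_mono mult_left_mono sum_mono) simp_all
  also have "\<dots> = wz N L \<zeta> y \<nu> \<alpha>" by (simp add: wz_closed_form q_def)
  finally show ?thesis unfolding q_def .
qed

lemma two_point_weights_pos_part_sum:
  assumes m: "m \<le> N" and t: "0 \<le> t" "t \<le> 1" and j: "j \<le> N"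
  shows "(\<Sum>i\<le>N+1. two_point_weights m t i * max 0 (\<zeta> j - \<zeta> (i+1)))
       = max 0 (\<zeta> j - (t * \<zeta> (m+1) + (1 - t) * \<zeta> (m+2)))"
proof -
  define q where "q = t * \<zeta> (m+1) + (1 - t) * \<zeta> (m+2)"
  have "0 \<le> t * (\<zeta> (m+1) - \<zeta> (m+2))" and "0 \<le> (1 - t) * (\<zeta> (m+1) - \<zeta> (m+2))"
    using zeta_step_less[of "m+1"] m t by simp_all
  then have q_lower: "\<zeta> (m+2) \<le> q" and q_upper: "q \<le> \<zeta> (m+1)"
    unfolding q_def by (simp_all add: algebra_simps)
  have sum_eq: "(\<Sum>i\<le>N+1. two_point_weights m t i * max 0 (\<zeta> j - \<zeta> (i+1)))
      = t * max 0 (\<zeta> j - \<zeta> (m+1)) + (1 - t) * max 0 (\<zeta> j - \<zeta> (m+2))"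
    using m sum_two_point_weights[of m "N+1" t "\<lambda>i. max 0 (\<zeta> j - \<zeta> (i+1))"] by simp
  consider "\<zeta> (m+1) \<le> \<zeta> j" | "\<zeta> j \<le> \<zeta> (m+2)"
    using zeta_le[of j "m+1"] zeta_le[of "m+2" j] m j by (cases "j \<le> m+1") simp_all
  then show ?thesis
  proof cases
    case 1
    then have "max 0 (\<zeta> j - \<zeta> (m+1)) = \<zeta> j - \<zeta> (m+1)"
      and "max 0 (\<zeta> j - \<zeta> (m+2)) = \<zeta> j - \<zeta> (m+2)"
      and "max 0 (\<zeta> j - q) = \<zeta> j - q"
      using q_lower q_upper by simp_all
    with sum_eq show ?thesis unfolding q_def[symmetric] by (simp add: q_def algebra_simps)
  next
    case 2
    with sum_eq q_lower q_upper show ?thesis unfolding q_def[symmetric] by simp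
  qed
qed

lemma wz_two_point_weights:
  fixes y :: "nat \<Rightarrow> real"
  assumes m: "m \<le> N" and t: "0 \<le> t" "t \<le> 1"
    and q: "q = t * \<zeta> (m+1) + (1 - t) * \<zeta> (m+2)"
  defines "\<nu> \<equiv> \<lambda>j. max 0 (- (y j + max 0 (\<zeta> j - q) / sqrt (\<zeta> j - \<zeta> (j+1))))"
  shows "feasible N \<nu> (two_point_weights m t)"
    and "wz N L \<zeta> y \<nu> (two_point_weights m t) = reduced_objective y q"
proof -
  show "feasible N \<nu> (two_point_weights m t)"
    using m t sum_two_point_weights[of m "N+1" t "\<lambda>_. 1"]
    by (auto simp: feasible_def \<nu>_def two_point_weights_def)
  have "(y j + \<nu> j + (\<Sum>i\<le>N+1. two_point_weights m t i * max 0 (\<zeta> j - \<zeta> (i+1)))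
          / sqrt (\<zeta> j - \<zeta> (j+1)))\<^sup>2
      = (max 0 (y j + max 0 (\<zeta> j - q) / sqrt (\<zeta> j - \<zeta> (j+1))))\<^sup>2" if "j \<le> N" for j
    using two_point_weights_pos_part_sum[OF m t that] q by (simp add: \<nu>_def max_def)
  moreover have "(\<Sum>i\<le>N+1. two_point_weights m t i * \<zeta> (i+1)) = q"
    using m q sum_two_point_weights[of m "N+1" t "\<lambda>i. \<zeta> (i+1)"] by simp
  ultimately show "wz N L \<zeta> y \<nu> (two_point_weights m t) = reduced_objective y q"
    unfolding wz_closed_form reduced_objective_def by simp
qed

end

theorem lemma2:
  fixes N :: nat and L :: real and \<zeta> y :: "nat \<Rightarrow> real"
  assumes "N > 0" and "L > 0"
    and "\<And>i. i \<le> N + 1 \<Longrightarrow> \<zeta> i > \<zeta> (i+1)"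
    and "\<zeta> (N+2) = 0"
  shows "\<exists>\<nu> \<alpha> m. feasible N \<nu> \<alpha>
           \<and> (\<forall>\<nu>' \<alpha>'. feasible N \<nu>' \<alpha>' \<longrightarrow> wz N L \<zeta> y \<nu> \<alpha> \<le> wz N L \<zeta> y \<nu>' \<alpha>')
           \<and> m \<le> N
           \<and> (\<forall>i\<le>N+1. i \<noteq> m \<and> i \<noteq> m + 1 \<longrightarrow> \<alpha> i = 0)
           \<and> \<alpha> (m+1) = 1 - \<alpha> m"
proof -
  interpret decreasing_grid N L \<zeta> using assms(2-4) by unfold_locales
  let ?H = "reduced_objective y"
  obtain q where q: "q \<in> {0..\<zeta> 1}" and q_min: "\<And>q'. q' \<in> {0..\<zeta> 1} \<Longrightarrow> ?H q \<le> ?H q'"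
    using continuous_attains_inf[OF compact_Icc _ continuous_on_reduced_objective[of "{0..\<zeta> 1}" y]] zeta_nonneg[of 1]
    by auto
  obtain m where m: "m \<le> N" and "\<zeta> (m+2) \<le> q" "q \<le> \<zeta> (m+1)"
    using exists_bracketing_index[of "\<lambda>k. \<zeta> (k+1)" N q] q zeta_last by auto
  moreover have "\<zeta> (m+2) < \<zeta> (m+1)" using zeta_step_less[of "m+1"] m by simp
  ultimately obtain t where t: "0 \<le> t" "t \<le> 1" and q_eq: "q = t * \<zeta> (m+1) + (1 - t) * \<zeta> (m+2)"
    using obtain_convex_weight by metis
  obtain \<nu> where feasible: "feasible N \<nu> (two_point_weights m t)"
    and attains: "wz N L \<zeta> y \<nu> (two_point_weights m t) = ?H q"
    using wz_two_point_weights[OF m t q_eq] by blast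
  have "wz N L \<zeta> y \<nu> (two_point_weights m t) \<le> wz N L \<zeta> y \<nu>' \<alpha>'" if "feasible N \<nu>' \<alpha>'" for \<nu>' \<alpha>'
    using attains q_min[OF feasible_weighted_zeta_bounds[OF that]] reduced_objective_le_wz[OF that, of y]
    by simp
  with feasible m show ?thesis
    by (intro exI[of _ \<nu>] exI[of _ "two_point_weights m t"] exI[of _ m])
      (simp add: two_point_weights_def)
qed

end
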